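(* Let $(Y,\rho_Y)$ be a complete separable metric space, $I$ a finite set, $X=Y\times I$, $\bar X=X\times[0,\infty)$. Let $\{\pi_{ij}\}_{i,j\in I}$ be a right stochastic matrix, $\{S_i\}_{i\in I}$ jointly continuous semiflows $S_i:[0,\infty)\times Y\to Y$, $J$ a stochastic kernel on $Y$, and $\lambda>0$. Let $\bar P$ be the stochastic kernel on $\bar X$ $$\bar P((y,i,s),\bar A)=\sum_{j\in I}\pi_{ij}\int_0^\infty\lambda e^{-\lambda t}\int_Y\mathbb{1}_{\bar A}(u,j,t+s)\,J(S_i(t,y),du)\,dt.$$ Let $\Psi=\{(Y(t),\xi(t))\}_{t\geq0}$ be the $X$-valued process such that $\{(Y(\tau_n),\xi(\tau_n),\tau_n)\}_{n\in\mathbb{N}_0}$ is a Markov chain with transition law $\bar P$ and $\tau_0=0$, and $Y(t)=S_{\xi(\tau_n)}(t-\tau_n,Y(\tau_n))$, $\xi(t)=\xi(\tau_n)$ for $t\in[\tau_n,\tau_{n+1})$, $n\in\mathbb{N}_0$; this is a time-homogeneous Markov process, and let $\{P(t)\}_{t\geq0}$ be its transition semigroup. Fix $y^*\in Y$ and put $V(y,i)=\rho_Y(y,y^* )$. Assume: (S1') there exist $M\geq0$, $\zeta\geq0$ with $\max_{i\in I}\rho_Y(S_i(t,y^* ),y^* )\leq Mt^\zeta$ for all $t\geq0$; (S2') there exists $L>0$ with $\rho_Y(S_i(t,y_1),S_i(t,y_2))\leq L\rho_Y(y_1,y_2)$ for all $t\geq0$, $y_1,y_2\in Y$, $i\in I$;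 (J1') there exist $a>0$, $b\geq0$ with $\int_Y\rho_Y^2(u,y^* )\,J(y,du)\leq a\rho_Y^2(y,y^* )+b$ for all $y\in Y$; and $2aL^2<1$. Then there exist $A,B\geq0$ and $\Gamma>0$ such that $P(t)V^2(x)\leq Ae^{-\Gamma t}V^2(x)+B$ for all $x\in X$ and $t\geq0$.
   Context: A semiflow satisfies $S_i(s,S_i(t,y))=S_i(s+t,y)$ and $S_i(0,y)=y$. $P(t)f(x)=\mathbb{E}_{(x,0)}f(\Psi(t))$ for Borel $f\geq0$, where the process starts at $\Psi(0)=x$, $\tau_0=0$. The inter-jump times $\tau_{n}-\tau_{n-1}$ are i.i.d. exponential with rate $\lambda$, so $\tau_n\uparrow\infty$ a.s. *)

theory Defs
  imports "HOL-Probability.Probability"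
begin

definition Xbar_space :: "('y::polish_space \<times> 'i::finite \<times> real) measure" where
  "Xbar_space = borel \<Otimes>\<^sub>M (count_space UNIV \<Otimes>\<^sub>M borel)"

definition Pbar ::
  "('i::finite \<Rightarrow> 'i \<Rightarrow> real) \<Rightarrow> ('i \<Rightarrow> real \<Rightarrow> 'y::polish_space \<Rightarrow> 'y)
   \<Rightarrow> ('y \<Rightarrow> 'y measure) \<Rightarrow> real \<Rightarrow> 'y \<times> 'i \<times> real \<Rightarrow> ('y \<times> 'i \<times> real) measure" where
  "Pbar \<pi> S J lam z = (case z of (y, i, s) \<Rightarrow>
     measure_of (space Xbar_space) (sets Xbar_space)
       (\<lambda>A. \<Sum>j\<in>UNIV. ennreal (\<pi> i j) *
          (\<integral>\<^sup>+ t\<in>{0..}. ennreal (lam * exp (- lam * t)) *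
             (\<integral>\<^sup>+ u. indicator A (u, j, t + s) \<partial>(J (S i t y))) \<partial>lborel)))"

definition markov_chain_kernel ::
  "'w measure \<Rightarrow> ('s measure) \<Rightarrow> ('s \<Rightarrow> 's measure) \<Rightarrow> (nat \<Rightarrow> 'w \<Rightarrow> 's) \<Rightarrow> bool" where
  "markov_chain_kernel M N K Z \<longleftrightarrow>
     (\<forall>n. Z n \<in> measurable M N) \<and>
     (\<forall>n. \<forall>h \<in> borel_measurable (PiM {..n} (\<lambda>_. N)). \<forall>A \<in> sets N.
        (\<integral>\<^sup>+ \<omega>. h (\<lambda>k\<in>{..n}. Z k \<omega>) * indicator A (Z (Suc n) \<omega>) \<partial>M) =
        (\<integral>\<^sup>+ \<omega>. h (\<lambda>k\<in>{..n}. Z k \<omega>) * emeasure (K (Z n \<omega>)) A \<partial>M))"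

text \<open>The piecewise-deterministic process Psi(t) = (Y(t), xi(t)) built from the chain
  Z n = (Y(tau_n), xi(tau_n), tau_n): on [tau_n, tau_(n+1)) it follows the semiflow.\<close>
definition Psi ::
  "('i \<Rightarrow> real \<Rightarrow> 'y \<Rightarrow> 'y) \<Rightarrow> (nat \<Rightarrow> 'w \<Rightarrow> 'y \<times> 'i \<times> real) \<Rightarrow> real \<Rightarrow> 'w \<Rightarrow> 'y \<times> 'i" where
  "Psi S Z t \<omega> = (let n = (LEAST n. t < snd (snd (Z (Suc n) \<omega>))) in
     (case Z n \<omega> of (y, i, s) \<Rightarrow> (S i (t - s) y, i)))"

end

theory Submission
  imports Defs "HOL-Real_Asymp.Real_Asymp"
begin

text \<open>For \<open>s \<le> t\<close> put
  \<open>G\<^sub>t(y, i, s) = \<alpha> exp(-\<Gamma>(t - s)) V(y)\<^sup>2 + \<beta> - \<gamma> exp(-\<Gamma>(t - s))\<close> and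
  \<open>\<phi>\<^sub>t(y, i, s) = exp(-\<lambda>(t - s)) V(S\<^sub>i(t - s, y))\<^sup>2\<close>, the value of \<open>V(\<Psi>(t))\<^sup>2\<close> when the last jump
  before \<open>t\<close> led to \<open>(y, i)\<close> at time \<open>s\<close>, weighted by the probability that the next jump comes
  after \<open>t\<close>; both vanish for \<open>s > t\<close>. The growth bounds (S1'), (S2') on the flows and the
  moment bound (J1') with \<open>2 a L\<^sup>2 < 1\<close> give, for suitable \<open>\<alpha>, \<beta>, \<gamma>, \<Gamma>\<close>, the drift inequality
  \<open>\<phi>\<^sub>t + Pbar G\<^sub>t \<le> G\<^sub>t\<close>. Summing it along the embedded chain \<open>Z\<^sub>n\<close> telescopes to
  \<open>E V(\<Psi>(t))\<^sup>2 \<le> \<Sum>\<^sub>n E \<phi>\<^sub>t(Z\<^sub>n) \<le> G\<^sub>t(x, 0) \<le> \<alpha> exp(-\<Gamma> t) V(x)\<^sup>2 + \<beta>\<close>, where the first step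
  needs the jump times to tend to infinity almost surely; this follows from
  \<open>E exp(-\<tau>\<^sub>n) \<le> (\<lambda> / (\<lambda> + 1))\<^sup>n\<close>.\<close>

lemma power_div_fact_le_exp:
  fixes x :: real
  assumes "0 \<le> x"
  shows "x ^ k / fact k \<le> exp x"
proof -
  have "(\<Sum>n\<in>{k}. x ^ n /\<^sub>R fact n) \<le> (\<Sum>n. x ^ n /\<^sub>R fact n)"
    using exp_converges[of x] assms by (intro sum_le_suminf) (auto simp: sums_iff)
  then show ?thesis
    by (simp add: exp_def divide_inverse mult.commute)
qed

lemma powr_le_mult_exp:
  fixes r p \<theta> :: real
  assumes "0 \<le> r" "0 \<le> p" "0 < \<theta>"
  shows "r powr p \<le> (1 + fact (nat \<lceil>p\<rceil>) / \<theta> ^ nat \<lceil>p\<rceil>) * exp (\<theta> * r)"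
proof -
  define k where "k = nat \<lceil>p\<rceil>"
  have "(\<theta> * r) ^ k / fact k \<le> exp (\<theta> * r)"
    using assms by (intro power_div_fact_le_exp) simp
  then have rk: "r ^ k \<le> fact k / \<theta> ^ k * exp (\<theta> * r)"
    using assms by (simp add: power_mult_distrib field_simps)
  have "r powr p \<le> 1 + r ^ k"
  proof (cases "r \<le> 1")
    case True
    then have "r powr p \<le> 1" using assms by (intro powr_le1) auto
    then show ?thesis using assms by (smt (verit) zero_le_power)
  next
    case False
    then have "r powr p \<le> r powr real k"
      unfolding k_def by (intro powr_mono) (auto simp: real_nat_ceiling_ge)
    also have "\<dots> = r ^ k" using False by (simp add: powr_realpow)
    finally show ?thesis by simp
  qed
  also have "\<dots> \<le> exp (\<theta> * r) + fact k / \<theta> ^ k * exp (\<theta> * r)"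
    using rk assms by (smt (verit) one_le_exp_iff mult_nonneg_nonneg)
  finally show ?thesis unfolding k_def by (simp add: algebra_simps)
qed

lemma nn_integral_exponential_density_tail:
  assumes "0 \<le> u" "0 < l"
  shows "(\<integral>\<^sup>+r. ennreal (exponential_density l r) * indicator {u..} r \<partial>lborel) = exp (- l * u)"
proof -
  have "(\<integral>\<^sup>+r. ennreal (exponential_density l r) * indicator {u..} r \<partial>lborel) = ennreal (0 - (- exp (- l * u)))"
  proof (rule nn_integral_FTC_atLeast)
    show "((\<lambda>r. - exp (- l * r)) has_real_derivative exponential_density l r) (at r)" if "u \<le> r" for r
      using that assms by (auto intro!: derivative_eq_intros simp: exponential_density_def mult.commute)
    show "((\<lambda>r. - exp (- l * r)) \<longlongrightarrow> 0) at_top" using assms by real_asymp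
  qed (use assms in \<open>auto simp: exponential_density_def\<close>)
  then show ?thesis by simp
qed

lemma nn_integral_exponential_density_exp:
  assumes "0 < l" "0 \<le> c"
  shows "(\<integral>\<^sup>+r. ennreal (exponential_density l r * exp (- c * r)) \<partial>lborel) = l / (l + c)"
proof -
  have lc: "l + c \<noteq> 0" using assms by simp
  have "(\<integral>\<^sup>+r. ennreal (exponential_density l r * exp (- c * r)) \<partial>lborel)
      = (\<integral>\<^sup>+r. ennreal (l * exp (- (l + c) * r)) * indicator {0..} r \<partial>lborel)"
    by (intro nn_integral_cong)
       (auto simp: exponential_density_def exp_add[symmetric] algebra_simps split: split_indicator)
  also have "\<dots> = ennreal (0 - (- l / (l + c) * exp (- (l + c) * 0)))"
  proof (rule nn_integral_FTC_atLeast)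
    fix r
    have "((\<lambda>r. - l / (l + c) * exp (- (l + c) * r)) has_real_derivative
        - l / (l + c) * (exp (- (l + c) * r) * - (l + c))) (at r)"
      using lc by (auto intro!: derivative_eq_intros)
    then show "((\<lambda>r. - l / (l + c) * exp (- (l + c) * r)) has_real_derivative l * exp (- (l + c) * r)) (at r)"
      by (rule DERIV_cong) (use lc in \<open>simp add: field_simps\<close>)
    show "((\<lambda>r. - l / (l + c) * exp (- (l + c) * r)) \<longlongrightarrow> 0) at_top"
      using assms by real_asymp
  qed (use assms in auto)
  finally show ?thesis by simp
qed

lemma nn_integral_exp_combination:
  fixes l \<kappa> \<Gamma> \<theta> u A B C :: real
  defines "V \<equiv> l * A / \<kappa> * (exp (- \<Gamma> * u) - exp (- l * u))
    + l * B / (\<kappa> - \<theta>) * (exp (- \<Gamma> * u) - exp (- (l - \<theta>) * u)) + C * (1 - exp (- l * u))"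
  assumes l: "l = \<kappa> + \<Gamma>" and \<kappa>: "0 < \<kappa>" "\<theta> < \<kappa>" and u: "0 \<le> u"
    and nonneg: "\<And>r. 0 \<le> r \<Longrightarrow> r \<le> u \<Longrightarrow>
      0 \<le> l * exp (- l * r) * (exp (- \<Gamma> * (u - r)) * (A + B * exp (\<theta> * r)) + C)"
  shows "(\<integral>\<^sup>+r. ennreal (l * exp (- l * r) * (exp (- \<Gamma> * (u - r)) * (A + B * exp (\<theta> * r)) + C))
            * indicator {0..u} r \<partial>lborel) = ennreal V"
    and "0 \<le> V"
proof -
  define F where "F r = - (l * A / \<kappa>) * exp (- \<Gamma> * u - \<kappa> * r)
    + - (l * B / (\<kappa> - \<theta>)) * exp (- \<Gamma> * u - (\<kappa> - \<theta>) * r) + - C * exp (0 - l * r)" for r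
  have exp_deriv: "((\<lambda>r. - c * exp (e - k * r)) has_real_derivative c * k * exp (e - k * r)) (at r)"
    for c e k r :: real
    by (auto intro!: derivative_eq_intros)
  have F': "(F has_real_derivative
      l * exp (- l * r) * (exp (- \<Gamma> * (u - r)) * (A + B * exp (\<theta> * r)) + C)) (at r)" for r
  proof -
    have "(F has_real_derivative l * A / \<kappa> * \<kappa> * exp (- \<Gamma> * u - \<kappa> * r)
        + l * B / (\<kappa> - \<theta>) * (\<kappa> - \<theta>) * exp (- \<Gamma> * u - (\<kappa> - \<theta>) * r) + C * l * exp (0 - l * r)) (at r)"
      unfolding F_def[abs_def] by (intro DERIV_add exp_deriv)
    moreover have "exp (- l * r) * exp (- \<Gamma> * (u - r)) = exp (- \<Gamma> * u - \<kappa> * r)"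
      "exp (- l * r) * exp (- \<Gamma> * (u - r)) * exp (\<theta> * r) = exp (- \<Gamma> * u - (\<kappa> - \<theta>) * r)"
      by (simp_all add: l exp_add[symmetric] algebra_simps)
    moreover have "l * exp (- l * r) * (exp (- \<Gamma> * (u - r)) * (A + B * exp (\<theta> * r)) + C)
      = l * A * (exp (- l * r) * exp (- \<Gamma> * (u - r)))
        + l * B * (exp (- l * r) * exp (- \<Gamma> * (u - r)) * exp (\<theta> * r)) + C * l * exp (- l * r)"
      by (simp add: algebra_simps)
    ultimately show ?thesis using \<kappa> by simp
  qed
  have "- \<Gamma> * u - \<kappa> * u = - l * u" "- \<Gamma> * u - (\<kappa> - \<theta>) * u = - (l - \<theta>) * u"
    by (simp_all add: l algebra_simps)
  then have V: "V = F u - F 0"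
    by (simp add: V_def F_def algebra_simps)
  show "(\<integral>\<^sup>+r. ennreal (l * exp (- l * r) * (exp (- \<Gamma> * (u - r)) * (A + B * exp (\<theta> * r)) + C))
            * indicator {0..u} r \<partial>lborel) = ennreal V"
    unfolding V using F' nonneg u by (intro nn_integral_FTC_Icc) auto
  show "0 \<le> V"
    unfolding V using F' nonneg u by (auto intro: DERIV_nonneg_imp_nondecreasing[of 0 u F])
qed

section \<open>Markov chains given by a kernel\<close>

lemma markov_chain_kernel_measurable:
  "markov_chain_kernel M N K Z \<Longrightarrow> Z n \<in> M \<rightarrow>\<^sub>M N"
  by (simp add: markov_chain_kernel_def)

lemma markov_chain_kernel_step:
  assumes MC: "markov_chain_kernel M N K Z"
    and g: "g \<in> borel_measurable N" and A: "A \<in> sets N"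
  shows "(\<integral>\<^sup>+\<omega>. g (Z n \<omega>) * indicator A (Z (Suc n) \<omega>) \<partial>M)
       = (\<integral>\<^sup>+\<omega>. g (Z n \<omega>) * emeasure (K (Z n \<omega>)) A \<partial>M)"
proof -
  have "(\<lambda>x. g (x n)) \<in> borel_measurable (PiM {..n} (\<lambda>_. N))"
    using measurable_compose[OF measurable_component_singleton[of n "{..n}" "\<lambda>_. N"] g] by simp
  with MC A show ?thesis
    unfolding markov_chain_kernel_def by fastforce
qed

lemma markov_chain_kernel_distr_Suc:
  assumes M: "prob_space M" and MC: "markov_chain_kernel M N K Z"
    and K: "K \<in> N \<rightarrow>\<^sub>M subprob_algebra N"
  shows "distr M N (Z (Suc n)) = M \<bind> (\<lambda>\<omega>. K (Z n \<omega>))"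
proof -
  have KZ: "(\<lambda>\<omega>. K (Z n \<omega>)) \<in> M \<rightarrow>\<^sub>M subprob_algebra N"
    using measurable_compose[OF markov_chain_kernel_measurable[OF MC] K] .
  have ne: "space M \<noteq> {}" using M by (simp add: prob_space.not_empty)
  show ?thesis
  proof (rule measure_eqI)
    show "sets (distr M N (Z (Suc n))) = sets (M \<bind> (\<lambda>\<omega>. K (Z n \<omega>)))"
      using sets_bind_measurable[OF KZ ne] by simp
  next
    fix A assume "A \<in> sets (distr M N (Z (Suc n)))"
    then have A: "A \<in> sets N" by simp
    have "emeasure (distr M N (Z (Suc n))) A = (\<integral>\<^sup>+\<omega>. 1 * indicator A (Z (Suc n) \<omega>) \<partial>M)"
      using A markov_chain_kernel_measurable[OF MC]
      by (simp add: nn_integral_indicator[symmetric] nn_integral_distr del: nn_integral_indicator)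
    also have "\<dots> = (\<integral>\<^sup>+\<omega>. 1 * emeasure (K (Z n \<omega>)) A \<partial>M)"
      by (rule markov_chain_kernel_step[OF MC _ A]) simp
    also have "\<dots> = emeasure (M \<bind> (\<lambda>\<omega>. K (Z n \<omega>))) A"
      by (simp add: emeasure_bind[OF ne KZ A])
    finally show "emeasure (distr M N (Z (Suc n))) A = emeasure (M \<bind> (\<lambda>\<omega>. K (Z n \<omega>))) A" .
  qed
qed

lemma markov_chain_kernel_nn_integral_Suc:
  assumes M: "prob_space M" and MC: "markov_chain_kernel M N K Z"
    and K: "K \<in> N \<rightarrow>\<^sub>M subprob_algebra N" and f: "f \<in> borel_measurable N"
  shows "(\<integral>\<^sup>+\<omega>. f (Z (Suc n) \<omega>) \<partial>M) = (\<integral>\<^sup>+\<omega>. (\<integral>\<^sup>+x. f x \<partial>K (Z n \<omega>)) \<partial>M)"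
proof -
  have "(\<integral>\<^sup>+\<omega>. f (Z (Suc n) \<omega>) \<partial>M) = (\<integral>\<^sup>+x. f x \<partial>distr M N (Z (Suc n)))"
    using f markov_chain_kernel_measurable[OF MC] by (simp add: nn_integral_distr)
  also have "\<dots> = (\<integral>\<^sup>+\<omega>. (\<integral>\<^sup>+x. f x \<partial>K (Z n \<omega>)) \<partial>M)"
    unfolding markov_chain_kernel_distr_Suc[OF M MC K]
    by (rule nn_integral_bind[OF f measurable_compose[OF markov_chain_kernel_measurable[OF MC] K]])
  finally show ?thesis .
qed

lemma markov_chain_kernel_suminf_le_lyapunov:
  assumes M: "prob_space M" and MC: "markov_chain_kernel M N K Z"
    and K: "K \<in> N \<rightarrow>\<^sub>M subprob_algebra N"
    and G: "G \<in> borel_measurable N" and \<phi>: "\<phi> \<in> borel_measurable N"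
    and drift: "\<And>z. z \<in> space N \<Longrightarrow> \<phi> z + (\<integral>\<^sup>+x. G x \<partial>K z) \<le> G z"
    and Z0: "AE \<omega> in M. Z 0 \<omega> = z0"
  shows "(\<Sum>n. \<integral>\<^sup>+\<omega>. \<phi> (Z n \<omega>) \<partial>M) \<le> G z0"
proof -
  interpret prob_space M by (rule M)
  note Z = markov_chain_kernel_measurable[OF MC]
  have step: "(\<integral>\<^sup>+\<omega>. \<phi> (Z n \<omega>) \<partial>M) + (\<integral>\<^sup>+\<omega>. G (Z (Suc n) \<omega>) \<partial>M) \<le> (\<integral>\<^sup>+\<omega>. G (Z n \<omega>) \<partial>M)" for n
  proof -
    have "(\<integral>\<^sup>+\<omega>. \<phi> (Z n \<omega>) \<partial>M) + (\<integral>\<^sup>+\<omega>. G (Z (Suc n) \<omega>) \<partial>M)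
       = (\<integral>\<^sup>+\<omega>. \<phi> (Z n \<omega>) + (\<integral>\<^sup>+x. G x \<partial>K (Z n \<omega>)) \<partial>M)"
      unfolding markov_chain_kernel_nn_integral_Suc[OF M MC K G]
      using measurable_compose[OF measurable_compose[OF Z K] nn_integral_measurable_subprob_algebra[OF G]]
        measurable_compose[OF Z \<phi>]
      by (intro nn_integral_add[symmetric]) auto
    also have "\<dots> \<le> (\<integral>\<^sup>+\<omega>. G (Z n \<omega>) \<partial>M)"
      using measurable_space[OF Z] by (intro nn_integral_mono drift)
    finally show ?thesis .
  qed
  have partial: "(\<Sum>k<n. \<integral>\<^sup>+\<omega>. \<phi> (Z k \<omega>) \<partial>M) + (\<integral>\<^sup>+\<omega>. G (Z n \<omega>) \<partial>M) \<le> G z0" for n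
  proof (induction n)
    case 0
    have "(\<integral>\<^sup>+\<omega>. G (Z 0 \<omega>) \<partial>M) = (\<integral>\<^sup>+\<omega>. G z0 \<partial>M)"
      using Z0 by (intro nn_integral_cong_AE) auto
    then show ?case by (simp add: emeasure_space_1)
  next
    case (Suc n)
    have "(\<Sum>k<Suc n. \<integral>\<^sup>+\<omega>. \<phi> (Z k \<omega>) \<partial>M) + (\<integral>\<^sup>+\<omega>. G (Z (Suc n) \<omega>) \<partial>M)
      = (\<Sum>k<n. \<integral>\<^sup>+\<omega>. \<phi> (Z k \<omega>) \<partial>M) + ((\<integral>\<^sup>+\<omega>. \<phi> (Z n \<omega>) \<partial>M) + (\<integral>\<^sup>+\<omega>. G (Z (Suc n) \<omega>) \<partial>M))"
      by (simp add: add.assoc)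
    also have "\<dots> \<le> (\<Sum>k<n. \<integral>\<^sup>+\<omega>. \<phi> (Z k \<omega>) \<partial>M) + (\<integral>\<^sup>+\<omega>. G (Z n \<omega>) \<partial>M)"
      by (rule add_left_mono[OF step])
    also have "\<dots> \<le> G z0" by (rule Suc.IH)
    finally show ?case .
  qed
  show ?thesis
    unfolding suminf_eq_SUP
    by (intro SUP_least order.trans[OF add_increasing2[OF zero_le order.refl] partial])
qed

lemma markov_chain_kernel_nn_integral_exp_le:
  fixes \<tau> :: "'s \<Rightarrow> real" and \<rho> :: real
  assumes M: "prob_space M" and MC: "markov_chain_kernel M N K Z"
    and K: "K \<in> N \<rightarrow>\<^sub>M subprob_algebra N" and \<tau>[measurable]: "\<tau> \<in> borel_measurable N"
    and \<rho>: "0 \<le> \<rho>"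
    and contract: "\<And>z. z \<in> space N \<Longrightarrow> (\<integral>\<^sup>+x. exp (- \<tau> x) \<partial>K z) \<le> ennreal (\<rho> * exp (- \<tau> z))"
    and Z0: "AE \<omega> in M. Z 0 \<omega> = z0"
  shows "(\<integral>\<^sup>+\<omega>. exp (- \<tau> (Z n \<omega>)) \<partial>M) \<le> ennreal (\<rho> ^ n * exp (- \<tau> z0))"
proof (induction n)
  case 0
  have "(\<integral>\<^sup>+\<omega>. exp (- \<tau> (Z 0 \<omega>)) \<partial>M) = (\<integral>\<^sup>+\<omega>. exp (- \<tau> z0) \<partial>M)"
    using Z0 by (intro nn_integral_cong_AE) auto
  then show ?case by (simp add: prob_space.emeasure_space_1[OF M])
next
  case (Suc n)
  note Z[measurable] = markov_chain_kernel_measurable[OF MC]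
  have "(\<integral>\<^sup>+\<omega>. exp (- \<tau> (Z (Suc n) \<omega>)) \<partial>M) = (\<integral>\<^sup>+\<omega>. (\<integral>\<^sup>+x. exp (- \<tau> x) \<partial>K (Z n \<omega>)) \<partial>M)"
    by (rule markov_chain_kernel_nn_integral_Suc[OF M MC K]) measurable
  also have "\<dots> \<le> (\<integral>\<^sup>+\<omega>. ennreal (\<rho> * exp (- \<tau> (Z n \<omega>))) \<partial>M)"
    using measurable_space[OF Z] by (intro nn_integral_mono contract)
  also have "\<dots> = \<rho> * (\<integral>\<^sup>+\<omega>. exp (- \<tau> (Z n \<omega>)) \<partial>M)"
    using \<rho> by (simp add: nn_integral_cmult ennreal_mult)
  also have "\<dots> \<le> \<rho> * ennreal (\<rho> ^ n * exp (- \<tau> z0))"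
    by (intro mult_left_mono Suc.IH) simp
  finally show ?case using \<rho> by (simp add: ennreal_mult[symmetric] mult.assoc)
qed

lemma markov_chain_kernel_AE_ex_gt:
  fixes \<tau> :: "'s \<Rightarrow> real" and \<rho> t :: real
  assumes M: "prob_space M" and MC: "markov_chain_kernel M N K Z"
    and K: "K \<in> N \<rightarrow>\<^sub>M subprob_algebra N" and \<tau>[measurable]: "\<tau> \<in> borel_measurable N"
    and \<rho>: "0 \<le> \<rho>" "\<rho> < 1"
    and contract: "\<And>z. z \<in> space N \<Longrightarrow> (\<integral>\<^sup>+x. exp (- \<tau> x) \<partial>K z) \<le> ennreal (\<rho> * exp (- \<tau> z))"
    and Z0: "AE \<omega> in M. Z 0 \<omega> = z0"
  shows "AE \<omega> in M. \<exists>n. t < \<tau> (Z (Suc n) \<omega>)"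
proof -
  interpret prob_space M by (rule M)
  note Z[measurable] = markov_chain_kernel_measurable[OF MC]
  note moment = markov_chain_kernel_nn_integral_exp_le[OF M MC K \<tau> \<rho>(1) contract Z0]
  define B where "B = {\<omega> \<in> space M. \<forall>n. \<tau> (Z (Suc n) \<omega>) \<le> t}"
  have B: "B \<in> sets M" unfolding B_def by measurable
  have bound: "measure M B \<le> exp t * (\<rho> ^ Suc n * exp (- \<tau> z0))" for n
  proof -
    have "emeasure M B \<le> (\<integral>\<^sup>+\<omega>. exp t * exp (- \<tau> (Z (Suc n) \<omega>)) \<partial>M)"
      unfolding nn_integral_indicator[OF B, symmetric]
      by (intro nn_integral_mono) (auto simp: B_def ennreal_mult[symmetric] exp_add[symmetric]
          split: split_indicator)
    also have "\<dots> = exp t * (\<integral>\<^sup>+\<omega>. exp (- \<tau> (Z (Suc n) \<omega>)) \<partial>M)"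
      by (simp add: nn_integral_cmult ennreal_mult)
    also have "\<dots> \<le> exp t * ennreal (\<rho> ^ Suc n * exp (- \<tau> z0))"
      by (intro mult_left_mono moment zero_le)
    finally show ?thesis
      using \<rho> by (simp add: emeasure_eq_measure ennreal_mult[symmetric])
  qed
  have "(\<lambda>n. \<rho> ^ Suc n) \<longlonglongrightarrow> 0"
    using \<rho> by (intro LIMSEQ_Suc LIMSEQ_power_zero) simp
  then have "(\<lambda>n. exp t * (\<rho> ^ Suc n * exp (- \<tau> z0))) \<longlonglongrightarrow> 0"
    by (intro tendsto_mult_right_zero tendsto_mult_left_zero)
  then have "measure M B \<le> 0"
    by (rule tendsto_lowerbound) (use bound in auto)
  then have "B \<in> null_sets M"
    using B by (simp add: null_sets_def emeasure_eq_measure measure_le_0_iff)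
  then show ?thesis
    by (rule AE_I') (auto simp: B_def not_less)
qed

section \<open>The jump kernel\<close>

abbreviation clock :: "'y \<times> 'i \<times> real \<Rightarrow> real" where
  "clock z \<equiv> snd (snd z)"

lemma space_Xbar_space: "space Xbar_space = UNIV"
  by (simp add: Xbar_space_def space_pair_measure)

lemma measurable_Xbar_space_Pair[measurable]:
  assumes [measurable]: "f \<in> M \<rightarrow>\<^sub>M borel" "g \<in> borel_measurable M"
  shows "(\<lambda>x. (f x, j, g x)) \<in> M \<rightarrow>\<^sub>M Xbar_space"
  unfolding Xbar_space_def by measurable

lemma measurable_Xbar_space_fst[measurable]: "fst \<in> Xbar_space \<rightarrow>\<^sub>M borel"
  unfolding Xbar_space_def by measurable

lemma measurable_Xbar_space_index[measurable]: "(\<lambda>z. fst (snd z)) \<in> Xbar_space \<rightarrow>\<^sub>M count_space UNIV"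
  unfolding Xbar_space_def by measurable

lemma measurable_Xbar_space_clock[measurable]: "clock \<in> borel_measurable Xbar_space"
  unfolding Xbar_space_def by measurable

lemma sets_Xbar_space_clock_gt[measurable]: "{z. t < clock z} \<in> sets Xbar_space"
proof -
  have "{z. t < clock z} = clock -` {t<..} \<inter> space Xbar_space"
    by (auto simp: space_Xbar_space)
  then show ?thesis
    by (metis measurable_sets[OF measurable_Xbar_space_clock] borel_open open_greaterThan)
qed

locale pdmp =
  fixes \<pi> :: "'i::finite \<Rightarrow> 'i \<Rightarrow> real" and S :: "'i \<Rightarrow> real \<Rightarrow> 'y::polish_space \<Rightarrow> 'y"
    and J :: "'y \<Rightarrow> 'y measure" and lam :: real
  assumes \<pi>_nonneg: "\<And>i j. 0 \<le> \<pi> i j" and \<pi>_sum: "\<And>i. (\<Sum>j\<in>UNIV. \<pi> i j) = 1"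
    and S_cont: "\<And>i. continuous_on ({0..} \<times> UNIV) (\<lambda>(t, y). S i t y)"
    and J_kernel: "J \<in> borel \<rightarrow>\<^sub>M prob_algebra borel"
    and lam_pos: "0 < lam"
begin

text \<open>The semiflows are only continuous for nonnegative times; freezing them at time 0 for
  negative times makes them Borel on all of \<open>real \<times> 'y\<close>. The exponential density vanishes on
  negative times, so the extension is never seen by \<^const>\<open>Pbar\<close>.\<close>
definition flow :: "'i \<Rightarrow> real \<Rightarrow> 'y \<Rightarrow> 'y" where
  "flow i r y = S i (max r 0) y"

lemma flow_nonneg: "0 \<le> r \<Longrightarrow> flow i r y = S i r y"
  by (simp add: flow_def)

lemma measurable_flow[measurable]:
  assumes [measurable]: "f \<in> borel_measurable M" "g \<in> M \<rightarrow>\<^sub>M borel"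
  shows "(\<lambda>x. flow i (f x) (g x)) \<in> M \<rightarrow>\<^sub>M borel"
proof -
  have "continuous_on UNIV (\<lambda>p. (\<lambda>(t, y). S i t y) (max (fst p) 0, snd p))"
    by (rule continuous_on_compose2[OF S_cont[of i]]) (auto intro!: continuous_intros)
  then have "(\<lambda>p. flow i (fst p) (snd p)) \<in> borel \<Otimes>\<^sub>M borel \<rightarrow>\<^sub>M borel"
    unfolding borel_prod flow_def by (intro borel_measurable_continuous_onI) simp
  from measurable_compose[OF measurable_Pair[OF assms] this] show ?thesis by simp
qed

lemma measurable_flow_Xbar_space[measurable]:
  assumes [measurable]: "f \<in> borel_measurable Xbar_space"
  shows "(\<lambda>z. flow (fst (snd z)) (f z) (fst z)) \<in> Xbar_space \<rightarrow>\<^sub>M borel"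
  using measurable_compose_countable[where f="\<lambda>i z. flow i (f z) (fst z)" and g="\<lambda>z. fst (snd z)"]
  by measurable

lemma measurable_J_subprob[measurable]: "J \<in> borel \<rightarrow>\<^sub>M subprob_algebra borel"
  by (rule measurable_prob_algebraD[OF J_kernel])

lemma prob_space_J: "prob_space (J y)" and sets_J: "sets (J y) = sets borel"
  using measurable_space[OF J_kernel, of y] by (auto simp: space_prob_algebra)

lemma emeasure_J_space[simp]: "emeasure (J y) (space (J y)) = 1"
  by (rule prob_space.emeasure_space_1[OF prob_space_J])

lemma sum_\<pi>_ennreal: "(\<Sum>j\<in>UNIV. ennreal (\<pi> i j)) = 1"
  using \<pi>_nonneg \<pi>_sum[of i] by (simp add: sum_ennreal)

text \<open>\<^const>\<open>Pbar\<close> as a composition of kernels: choose the new index \<open>j\<close> with law \<open>\<pi> i\<close>, the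
  holding time \<open>r\<close> with exponential law, and the new position with law \<open>J (S i r y)\<close>.\<close>
definition jump_measure :: "'y \<Rightarrow> 'i \<Rightarrow> real \<Rightarrow> ('y \<times> 'i \<times> real) measure" where
  "jump_measure y i s = density (count_space UNIV) (\<lambda>j. ennreal (\<pi> i j)) \<bind> (\<lambda>j.
     density lborel (exponential_density lam) \<bind> (\<lambda>r.
       distr (J (flow i r y)) Xbar_space (\<lambda>v. (v, j, r + s))))"

lemma measurable_landing:
  "(\<lambda>r. distr (J (flow i r y)) Xbar_space (\<lambda>v. (v, j, r + s)))
     \<in> density lborel (exponential_density lam) \<rightarrow>\<^sub>M subprob_algebra Xbar_space"
proof -
  have "(\<lambda>r. distr (J (flow i r y)) Xbar_space (\<lambda>v. (v, j, r + s))) \<in> borel \<rightarrow>\<^sub>M subprob_algebra Xbar_space"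
    by (rule measurable_distr2[where M=borel]) measurable
  then show ?thesis
    by (simp cong: measurable_cong_sets)
qed

lemma subprob_space_holding:
  "subprob_space (density lborel (exponential_density lam) \<bind> (\<lambda>r.
     distr (J (flow i r y)) Xbar_space (\<lambda>v. (v, j, r + s))))"
  by (intro subprob_space_bind[OF _ measurable_landing] prob_space_imp_subprob_space
      prob_space_exponential_density lam_pos)

lemma sets_holding:
  "sets (density lborel (exponential_density lam) \<bind> (\<lambda>r.
     distr (J (flow i r y)) Xbar_space (\<lambda>v. (v, j, r + s)))) = sets Xbar_space"
  by (rule sets_bind) auto

lemma nn_integral_jump_measure:
  assumes f[measurable]: "f \<in> borel_measurable Xbar_space"
  shows "(\<integral>\<^sup>+x. f x \<partial>jump_measure y i s) = (\<Sum>j\<in>UNIV. ennreal (\<pi> i j) *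
     (\<integral>\<^sup>+r. exponential_density lam r * (\<integral>\<^sup>+v. f (v, j, r + s) \<partial>J (flow i r y)) \<partial>lborel))"
proof -
  have holding: "(\<lambda>j. density lborel (exponential_density lam) \<bind> (\<lambda>r.
       distr (J (flow i r y)) Xbar_space (\<lambda>v. (v, j, r + s))))
     \<in> density (count_space UNIV) (\<lambda>j. ennreal (\<pi> i j)) \<rightarrow>\<^sub>M subprob_algebra Xbar_space"
    by (simp add: measurable_cong_sets[OF sets_density refl] space_subprob_algebra
        subprob_space_holding sets_holding)
  have "(\<integral>\<^sup>+r. (\<integral>\<^sup>+x. f x \<partial>distr (J (flow i r y)) Xbar_space (\<lambda>v. (v, j, r + s)))
            \<partial>density lborel (exponential_density lam))
      = (\<integral>\<^sup>+r. exponential_density lam r * (\<integral>\<^sup>+v. f (v, j, r + s) \<partial>J (flow i r y)) \<partial>lborel)" for j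
    using measurable_compose[OF measurable_landing nn_integral_measurable_subprob_algebra[OF f]]
    by (subst nn_integral_density)
       (auto intro!: nn_integral_cong simp: nn_integral_distr measurable_cong_sets[OF sets_J refl])
  then show ?thesis
    unfolding jump_measure_def nn_integral_bind[OF f holding] nn_integral_bind[OF f measurable_landing]
    by (simp add: nn_integral_density nn_integral_count_space_finite)
qed

lemma Pbar_eq_jump_measure: "Pbar \<pi> S J lam (y, i, s) = jump_measure y i s"
proof -
  have sets: "sets (jump_measure y i s) = sets Xbar_space"
    unfolding jump_measure_def by (rule sets_bind) (auto simp: sets_holding)
  have "(\<Sum>j\<in>UNIV. ennreal (\<pi> i j) *
          (\<integral>\<^sup>+ t\<in>{0..}. ennreal (lam * exp (- lam * t)) *
             (\<integral>\<^sup>+ u. indicator A (u, j, t + s) \<partial>(J (S i t y))) \<partial>lborel))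
      = emeasure (jump_measure y i s) A" if A: "A \<in> sets Xbar_space" for A
  proof -
    have pointwise: "exponential_density lam r * (\<integral>\<^sup>+v. indicator A (v, j, r + s) \<partial>J (flow i r y))
        = ennreal (lam * exp (- lam * r)) * (\<integral>\<^sup>+u. indicator A (u, j, r + s) \<partial>J (S i r y))
          * indicator {0..} r" for j r
      by (cases "0 \<le> r") (simp_all add: exponential_density_def flow_nonneg mult_ac)
    have "emeasure (jump_measure y i s) A = (\<integral>\<^sup>+x. indicator A x \<partial>jump_measure y i s)"
      using A sets by simp
    also have "\<dots> = (\<Sum>j\<in>UNIV. ennreal (\<pi> i j) * (\<integral>\<^sup>+r. exponential_density lam r *
        (\<integral>\<^sup>+v. indicator A (v, j, r + s) \<partial>J (flow i r y)) \<partial>lborel))"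
      using A by (intro nn_integral_jump_measure borel_measurable_indicator)
    also have "\<dots> = (\<Sum>j\<in>UNIV. ennreal (\<pi> i j) *
          (\<integral>\<^sup>+ r\<in>{0..}. ennreal (lam * exp (- lam * r)) *
             (\<integral>\<^sup>+ u. indicator A (u, j, r + s) \<partial>(J (S i r y))) \<partial>lborel))"
      by (intro sum.cong refl arg_cong2[where f="(*)"] nn_integral_cong pointwise)
    finally show ?thesis by (rule sym)
  qed
  then have "Pbar \<pi> S J lam (y, i, s)
      = measure_of (space Xbar_space) (sets Xbar_space) (emeasure (jump_measure y i s))"
    unfolding Pbar_def
    by (simp, intro measure_of_eq[OF sets.space_closed]) (simp add: sets.sigma_sets_eq)
  also have "\<dots> = jump_measure y i s"
    using measure_of_of_measure[of "jump_measure y i s"] sets sets_eq_imp_space_eq[OF sets] by simp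
  finally show ?thesis .
qed

lemma nn_integral_Pbar:
  assumes "f \<in> borel_measurable Xbar_space"
  shows "(\<integral>\<^sup>+x. f x \<partial>Pbar \<pi> S J lam (y, i, s)) = (\<Sum>j\<in>UNIV. ennreal (\<pi> i j) *
     (\<integral>\<^sup>+r. exponential_density lam r * (\<integral>\<^sup>+v. f (v, j, r + s) \<partial>J (flow i r y)) \<partial>lborel))"
  unfolding Pbar_eq_jump_measure using assms by (rule nn_integral_jump_measure)

lemma sets_Pbar: "sets (Pbar \<pi> S J lam z) = sets Xbar_space"
  by (cases z) (simp add: Pbar_eq_jump_measure jump_measure_def sets_bind[OF sets_holding])

lemma nn_integral_Pbar_clock:
  fixes f :: "real \<Rightarrow> ennreal"
  assumes f[measurable]: "f \<in> borel_measurable borel"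
  shows "(\<integral>\<^sup>+x. f (clock x) \<partial>Pbar \<pi> S J lam (y, i, s))
       = (\<integral>\<^sup>+r. exponential_density lam r * f (r + s) \<partial>lborel)"
  by (simp add: nn_integral_Pbar sum_distrib_right[symmetric] sum_\<pi>_ennreal)

lemma prob_space_Pbar: "prob_space (Pbar \<pi> S J lam z)"
proof (rule prob_spaceI)
  obtain y i s where z: "z = (y, i, s)" by (cases z)
  have "emeasure (Pbar \<pi> S J lam z) (space (Pbar \<pi> S J lam z)) = (\<integral>\<^sup>+x. 1 \<partial>Pbar \<pi> S J lam z)"
    by simp
  also have "\<dots> = (\<integral>\<^sup>+r. exponential_density lam r \<partial>lborel)"
    using nn_integral_Pbar_clock[of "\<lambda>_. 1" y i s] by (simp add: z)
  also have "\<dots> = 1"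
    using prob_space.emeasure_space_1[OF prob_space_exponential_density[OF lam_pos]]
    by (simp add: emeasure_density)
  finally show "emeasure (Pbar \<pi> S J lam z) (space (Pbar \<pi> S J lam z)) = 1" .
qed

lemma measurable_Pbar: "Pbar \<pi> S J lam \<in> Xbar_space \<rightarrow>\<^sub>M subprob_algebra Xbar_space"
proof (rule measurable_subprob_algebra)
  fix z show "subprob_space (Pbar \<pi> S J lam z)"
    by (rule prob_space_imp_subprob_space[OF prob_space_Pbar])
  show "sets (Pbar \<pi> S J lam z) = sets Xbar_space" by (rule sets_Pbar)
next
  fix A :: "('y \<times> 'i \<times> real) set" assume A[measurable]: "A \<in> sets Xbar_space"
  have inner: "(\<lambda>p. \<integral>\<^sup>+v. indicator A (v, j, snd p + clock (fst p)) \<partial>J (flow i (snd p) (fst (fst p))))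
      \<in> borel_measurable (Xbar_space \<Otimes>\<^sub>M lborel)" for i j
    by (rule nn_integral_measurable_subprob_algebra2[where N=borel]) measurable
  have "(\<lambda>z. (\<lambda>i z. \<Sum>j\<in>UNIV. ennreal (\<pi> i j) * (\<integral>\<^sup>+r. exponential_density lam r *
        (\<integral>\<^sup>+v. indicator A (v, j, r + clock z) \<partial>J (flow i r (fst z))) \<partial>lborel)) (fst (snd z)) z)
      \<in> borel_measurable Xbar_space"
    by (rule measurable_compose_countable) (use inner in measurable)
  moreover have "emeasure (Pbar \<pi> S J lam z) A = (\<Sum>j\<in>UNIV. ennreal (\<pi> (fst (snd z)) j) *
      (\<integral>\<^sup>+r. exponential_density lam r *
        (\<integral>\<^sup>+v. indicator A (v, j, r + clock z) \<partial>J (flow (fst (snd z)) r (fst z))) \<partial>lborel))" for z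
    using A by (cases z) (simp add: nn_integral_Pbar[symmetric] sets_Pbar)
  ultimately show "(\<lambda>z. emeasure (Pbar \<pi> S J lam z) A) \<in> borel_measurable Xbar_space"
    by simp
qed

lemma emeasure_Pbar_clock_gt:
  assumes "s \<le> t"
  shows "emeasure (Pbar \<pi> S J lam (y, i, s)) {z. t < clock z} \<le> exp (- lam * (t - s))"
proof -
  have "emeasure (Pbar \<pi> S J lam (y, i, s)) {z. t < clock z}
      = (\<integral>\<^sup>+x. indicator {z. t < clock z} x \<partial>Pbar \<pi> S J lam (y, i, s))"
    using sets_Xbar_space_clock_gt[of t] by (simp add: sets_Pbar)
  also have "\<dots> = (\<integral>\<^sup>+x. indicator {t<..} (clock x) \<partial>Pbar \<pi> S J lam (y, i, s))"
    by (intro nn_integral_cong) (simp split: split_indicator)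
  also have "\<dots> = (\<integral>\<^sup>+r. ennreal (exponential_density lam r) * indicator {t<..} (r + s) \<partial>lborel)"
    by (rule nn_integral_Pbar_clock) simp
  also have "\<dots> \<le> (\<integral>\<^sup>+r. ennreal (exponential_density lam r) * indicator {t - s..} r \<partial>lborel)"
    by (intro nn_integral_mono mult_left_mono) (auto split: split_indicator)
  also have "\<dots> = exp (- lam * (t - s))"
    using assms lam_pos by (intro nn_integral_exponential_density_tail) auto
  finally show ?thesis .
qed

lemma nn_integral_Pbar_exp_clock:
  "(\<integral>\<^sup>+x. exp (- clock x) \<partial>Pbar \<pi> S J lam (y, i, s)) = ennreal (lam / (lam + 1) * exp (- s))"
proof -
  have "(\<integral>\<^sup>+x. exp (- clock x) \<partial>Pbar \<pi> S J lam (y, i, s))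
      = (\<integral>\<^sup>+r. ennreal (exponential_density lam r) * exp (- (r + s)) \<partial>lborel)"
    by (rule nn_integral_Pbar_clock[where f="\<lambda>x. ennreal (exp (- x))"]) simp
  also have "\<dots> = (\<integral>\<^sup>+r. ennreal (exponential_density lam r * exp (- 1 * r)) * exp (- s) \<partial>lborel)"
    by (intro nn_integral_cong)
       (simp add: ennreal_mult[symmetric] exponential_density_nonneg[OF lam_pos] mult_exp_exp mult.assoc)
  also have "\<dots> = (\<integral>\<^sup>+r. ennreal (exponential_density lam r * exp (- 1 * r)) \<partial>lborel) * exp (- s)"
    by (rule nn_integral_multc) simp
  also have "\<dots> = ennreal (lam / (lam + 1) * exp (- s))"
    using lam_pos nn_integral_exponential_density_exp[OF lam_pos, of 1]
    by (simp add: ennreal_mult[symmetric])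
  finally show ?thesis .
qed

end

section \<open>The Lyapunov function\<close>

locale pdmp_lyapunov = pdmp \<pi> S J lam
  for \<pi> :: "'i::finite \<Rightarrow> 'i \<Rightarrow> real" and S :: "'i \<Rightarrow> real \<Rightarrow> 'y::polish_space \<Rightarrow> 'y"
    and J :: "'y \<Rightarrow> 'y measure" and lam :: real +
  fixes ystar :: 'y and Mc \<zeta> L a b :: real
  assumes S1: "0 \<le> Mc" "0 \<le> \<zeta>" "\<And>t. 0 \<le> t \<Longrightarrow> (MAX i\<in>UNIV. dist (S i t ystar) ystar) \<le> Mc * t powr \<zeta>"
    and S2: "0 < L" "\<And>t y1 y2 i. 0 \<le> t \<Longrightarrow> dist (S i t y1) (S i t y2) \<le> L * dist y1 y2"
    and J1: "0 < a" "0 \<le> b"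
      "\<And>y. (\<integral>\<^sup>+ u. ennreal ((dist u ystar)\<^sup>2) \<partial>(J y)) \<le> ennreal (a * (dist y ystar)\<^sup>2 + b)"
    and contr: "2 * a * L\<^sup>2 < 1"
begin

text \<open>Along a flow \<open>V\<^sup>2\<close> grows at most like \<open>2 L\<^sup>2 V\<^sup>2 + D0 exp(\<theta> t)\<close> and a jump maps \<open>V\<^sup>2\<close>
  to at most \<open>a V\<^sup>2 + b\<close> on average, so a flow-jump cycle contracts \<open>V\<^sup>2\<close> by \<open>q = 2 a L\<^sup>2 < 1\<close>.
  The jump rate is split as \<open>\<lambda> = \<kappa> + \<Gamma>\<close>: \<open>\<Gamma>\<close> is the decay rate of the bound, and \<open>\<kappa>\<close> must
  still exceed the growth rate \<open>\<theta>\<close> of the flow orbits of \<open>y\<^sup>*\<close>. The weights \<open>\<alpha>, \<beta>, \<gamma>\<close> solve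
  the linear equations that make \<open>drift_budget\<close> hold.\<close>
definition "q = 2 * a * L\<^sup>2"
definition "\<Gamma> = lam * (1 - q) / 2"
definition "\<kappa> = lam - \<Gamma>"
definition "\<theta> = \<kappa> / 2"
definition "D0 = 2 * Mc\<^sup>2 * (1 + fact (nat \<lceil>2 * \<zeta>\<rceil>) / \<theta> ^ nat \<lceil>2 * \<zeta>\<rceil>)"
definition "C1 = a * D0"
definition "q' = lam * q / \<kappa>"
definition "\<alpha> = 2 * L\<^sup>2 / (1 - q')"
definition "\<gamma> = \<kappa> / \<Gamma> * (D0 + \<alpha> * lam * b / \<kappa> + \<alpha> * lam * C1 / (\<kappa> - \<theta>))"
definition "\<beta> = \<gamma> * lam / \<kappa>"

lemma q_pos: "0 < q" and q_less_1: "q < 1"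
  using contr J1(1) S2(1) by (auto simp: q_def)

lemma \<Gamma>_pos: "0 < \<Gamma>"
  using q_less_1 lam_pos by (simp add: \<Gamma>_def)

lemma lam_eq: "lam = \<kappa> + \<Gamma>"
  by (simp add: \<kappa>_def)

lemma \<kappa>_eq: "\<kappa> = lam * (1 + q) / 2"
  by (simp add: \<kappa>_def \<Gamma>_def field_simps)

lemma \<kappa>_pos: "0 < \<kappa>"
  unfolding \<kappa>_eq using q_pos lam_pos by simp

lemma \<theta>_pos: "0 < \<theta>" and \<theta>_less_\<kappa>: "\<theta> < \<kappa>"
  using \<kappa>_pos by (auto simp: \<theta>_def)

lemma D0_nonneg: "0 \<le> D0"
  using \<theta>_pos by (simp add: D0_def)

lemma C1_nonneg: "0 \<le> C1"
  using D0_nonneg J1(1) by (simp add: C1_def)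

lemma q'_nonneg: "0 \<le> q'" and q'_less_1: "q' < 1"
proof -
  have "q' = (lam * q) / (lam * ((1 + q) / 2))"
    by (simp add: q'_def \<kappa>_eq)
  also have "\<dots> = 2 * q / (1 + q)"
    using lam_pos by (subst mult_divide_mult_cancel_left) auto
  finally have "q' = 2 * q / (1 + q)" .
  then show "0 \<le> q'" "q' < 1"
    using q_pos q_less_1 by (auto simp: divide_less_eq)
qed

lemma \<alpha>_nonneg: "0 \<le> \<alpha>"
  using q'_less_1 by (simp add: \<alpha>_def)

lemma \<alpha>_eq: "\<alpha> * (1 - q') = 2 * L\<^sup>2"
  using q'_less_1 by (simp add: \<alpha>_def)

lemma \<gamma>_nonneg: "0 \<le> \<gamma>"
  using \<kappa>_pos \<Gamma>_pos D0_nonneg \<alpha>_nonneg lam_pos J1(2) C1_nonneg \<theta>_less_\<kappa> by (simp add: \<gamma>_def)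

lemma \<gamma>_le_\<beta>: "\<gamma> \<le> \<beta>"
proof -
  have "1 \<le> lam / \<kappa>" using \<kappa>_pos lam_eq \<Gamma>_pos by simp
  then show ?thesis
    using \<gamma>_nonneg mult_left_mono[of 1 "lam / \<kappa>" \<gamma>] by (simp add: \<beta>_def)
qed

lemma drift_budget:
  fixes c E1 E2 E3 :: real
  assumes "0 \<le> c" "0 \<le> E2" "E2 \<le> E3" "E3 \<le> E1"
  shows "E2 * (2 * L\<^sup>2 * c) + D0 * E3
      + (lam * (\<alpha> * (q * c + b) - \<gamma>) / \<kappa> * (E1 - E2) + lam * (\<alpha> * C1) / (\<kappa> - \<theta>) * (E1 - E3)
         + \<beta> * (1 - E2))
    \<le> \<alpha> * E1 * c + \<beta> - \<gamma> * E1"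
proof -
  define A B where "A = lam / \<kappa>" and "B = lam / (\<kappa> - \<theta>)"
  have A: "0 \<le> A" and B: "0 \<le> B"
    using lam_pos \<kappa>_pos \<theta>_less_\<kappa> by (simp_all add: A_def B_def)
  have q': "q' = A * q" and \<beta>: "\<beta> = \<gamma> * A"
    by (simp_all add: q'_def \<beta>_def A_def)
  have "A - 1 = \<Gamma> / \<kappa>"
    using \<kappa>_pos by (simp add: A_def \<kappa>_def field_simps)
  then have \<gamma>: "\<gamma> * (A - 1) = D0 + \<alpha> * A * b + \<alpha> * B * C1"
    using \<kappa>_pos \<Gamma>_pos by (simp add: \<gamma>_def A_def B_def)
  have "\<alpha> * E1 * c + \<beta> - \<gamma> * E1 - (E2 * (\<alpha> * (1 - q') * c) + D0 * E3
      + (A * (\<alpha> * (q * c + b) - \<gamma>) * (E1 - E2) + B * (\<alpha> * C1) * (E1 - E3) + \<beta> * (1 - E2)))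
    = c * (\<alpha> * (1 - q') * (E1 - E2) + q' * \<alpha> * E2) + E1 * (\<gamma> * (A - 1) - D0 - \<alpha> * A * b - \<alpha> * B * C1)
      + D0 * (E1 - E3) + A * \<alpha> * b * E2 + B * \<alpha> * C1 * E3"
    unfolding q' \<beta> by (simp add: algebra_simps)
  also have "\<dots> \<ge> 0"
    \<comment> \<open>by the choice of \<open>\<gamma>\<close> the coefficient of \<open>E1\<close> vanishes\<close>
    unfolding \<gamma> using assms A B \<alpha>_nonneg q'_nonneg q'_less_1 D0_nonneg C1_nonneg J1(2)
    by (intro add_nonneg_nonneg mult_nonneg_nonneg) auto
  finally show ?thesis
    unfolding \<alpha>_eq[symmetric] by (simp add: A_def B_def)
qed

lemma dist_flow_sq_le:
  assumes r: "0 \<le> r"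
  shows "(dist (S i r y) ystar)\<^sup>2 \<le> 2 * L\<^sup>2 * (dist y ystar)\<^sup>2 + D0 * exp (\<theta> * r)"
proof -
  have "dist (S i r ystar) ystar \<le> Mc * r powr \<zeta>"
    using Max_ge[of "range (\<lambda>i. dist (S i r ystar) ystar)"] S1(3)[OF r] by fastforce
  then have "dist (S i r y) ystar \<le> L * dist y ystar + Mc * r powr \<zeta>"
    using dist_triangle[of "S i r y" ystar "S i r ystar"] S2(2)[OF r, of i y ystar] by linarith
  then have "(dist (S i r y) ystar)\<^sup>2 \<le> (L * dist y ystar + Mc * r powr \<zeta>)\<^sup>2"
    by (intro power_mono) auto
  also have "\<dots> \<le> 2 * (L * dist y ystar)\<^sup>2 + 2 * (Mc * r powr \<zeta>)\<^sup>2"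
    by (smt (verit) sum_squares_bound power2_sum)
  also have "(Mc * r powr \<zeta>)\<^sup>2 = Mc\<^sup>2 * r powr (2 * \<zeta>)"
    using r by (simp add: power_mult_distrib power2_eq_square powr_add[symmetric])
  also have "\<dots> \<le> Mc\<^sup>2 * ((1 + fact (nat \<lceil>2 * \<zeta>\<rceil>) / \<theta> ^ nat \<lceil>2 * \<zeta>\<rceil>) * exp (\<theta> * r))"
    using r S1(2) \<theta>_pos by (intro mult_left_mono powr_le_mult_exp) auto
  finally show ?thesis by (simp add: D0_def power_mult_distrib algebra_simps)
qed

definition lyap :: "real \<Rightarrow> 'y \<times> 'i \<times> real \<Rightarrow> ennreal" where
  "lyap t z = (if clock z \<le> t then ennreal (\<alpha> * exp (- \<Gamma> * (t - clock z)) * (dist (fst z) ystar)\<^sup>2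
      + \<beta> - \<gamma> * exp (- \<Gamma> * (t - clock z))) else 0)"

definition V2_flow :: "real \<Rightarrow> 'y \<times> 'i \<times> real \<Rightarrow> ennreal" where
  "V2_flow t z = (if clock z \<le> t
     then ennreal ((dist (flow (fst (snd z)) (t - clock z) (fst z)) ystar)\<^sup>2) else 0)"

definition V2_survival :: "real \<Rightarrow> 'y \<times> 'i \<times> real \<Rightarrow> ennreal" where
  "V2_survival t z = V2_flow t z * exp (- lam * (t - clock z))"

lemma measurable_lyap[measurable]: "lyap t \<in> borel_measurable Xbar_space"
  unfolding lyap_def by measurable

lemma measurable_V2_flow[measurable]: "V2_flow t \<in> borel_measurable Xbar_space"
  unfolding V2_flow_def by measurable

lemma measurable_V2_survival[measurable]: "V2_survival t \<in> borel_measurable Xbar_space"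
  unfolding V2_survival_def by measurable

lemma nn_integral_J_lyap_le:
  assumes r: "0 \<le> r" "r \<le> t - s"
  shows "(\<integral>\<^sup>+v. lyap t (v, j, r + s) \<partial>J (S i r y))
    \<le> exp (- \<Gamma> * (t - s - r)) * (\<alpha> * (q * (dist y ystar)\<^sup>2 + b) - \<gamma> + \<alpha> * C1 * exp (\<theta> * r)) + \<beta>"
proof -
  define e where "e = exp (- \<Gamma> * (t - s - r))"
  have e: "0 \<le> e" "e \<le> 1" using r \<Gamma>_pos by (auto simp: e_def)
  then have \<beta>\<gamma>: "0 \<le> \<beta> - \<gamma> * e"
    using \<gamma>_nonneg \<gamma>_le_\<beta> by (smt (verit) mult_left_le)
  have \<alpha>e: "0 \<le> \<alpha> * e" using \<alpha>_nonneg e by simp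
  have "lyap t (v, j, r + s) = ennreal (\<alpha> * e) * ennreal ((dist v ystar)\<^sup>2) + ennreal (\<beta> - \<gamma> * e)"
    for v
  proof -
    have "lyap t (v, j, r + s) = ennreal (\<alpha> * e * (dist v ystar)\<^sup>2 + (\<beta> - \<gamma> * e))"
      using r by (simp add: lyap_def e_def algebra_simps)
    then show ?thesis using \<alpha>e \<beta>\<gamma> by (simp add: ennreal_plus ennreal_mult)
  qed
  then have "(\<integral>\<^sup>+v. lyap t (v, j, r + s) \<partial>J (S i r y))
      = ennreal (\<alpha> * e) * (\<integral>\<^sup>+v. ennreal ((dist v ystar)\<^sup>2) \<partial>J (S i r y)) + ennreal (\<beta> - \<gamma> * e)"
    by (simp add: nn_integral_add nn_integral_cmult measurable_cong_sets[OF sets_J refl])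
  also have "\<dots> \<le> ennreal (\<alpha> * e) * ennreal (a * (dist (S i r y) ystar)\<^sup>2 + b) + ennreal (\<beta> - \<gamma> * e)"
    by (intro add_mono mult_left_mono J1(3)) auto
  also have "\<dots> = ennreal (\<alpha> * e * (a * (dist (S i r y) ystar)\<^sup>2 + b) + (\<beta> - \<gamma> * e))"
    using \<alpha>e \<beta>\<gamma> J1 by (simp add: ennreal_plus ennreal_mult)
  also have "\<dots> \<le> e * (\<alpha> * (q * (dist y ystar)\<^sup>2 + b) - \<gamma> + \<alpha> * C1 * exp (\<theta> * r)) + \<beta>"
  proof (rule ennreal_leI)
    have "a * (dist (S i r y) ystar)\<^sup>2 \<le> a * (2 * L\<^sup>2 * (dist y ystar)\<^sup>2 + D0 * exp (\<theta> * r))"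
      using dist_flow_sq_le[OF r(1)] J1(1) by (intro mult_left_mono) auto
    then have "\<alpha> * e * (a * (dist (S i r y) ystar)\<^sup>2 + b)
        \<le> \<alpha> * e * (q * (dist y ystar)\<^sup>2 + b + C1 * exp (\<theta> * r))"
      using \<alpha>e by (intro mult_left_mono) (auto simp: q_def C1_def algebra_simps)
    then show "\<alpha> * e * (a * (dist (S i r y) ystar)\<^sup>2 + b) + (\<beta> - \<gamma> * e)
        \<le> e * (\<alpha> * (q * (dist y ystar)\<^sup>2 + b) - \<gamma> + \<alpha> * C1 * exp (\<theta> * r)) + \<beta>"
      by (simp add: algebra_simps)
  qed
  finally show ?thesis by (simp add: e_def)
qed

lemma lyap_jump_bound_nonneg:
  assumes "0 \<le> c" "r \<le> u"
  shows "0 \<le> exp (- \<Gamma> * (u - r)) * (\<alpha> * (q * c + b) - \<gamma> + \<alpha> * C1 * exp (\<theta> * r)) + \<beta>"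
proof -
  have "exp (- \<Gamma> * (u - r)) \<le> 1" using assms \<Gamma>_pos by simp
  then have "\<gamma> * exp (- \<Gamma> * (u - r)) \<le> \<beta>"
    using \<gamma>_nonneg \<gamma>_le_\<beta> by (smt (verit) mult_left_le)
  moreover have "0 \<le> exp (- \<Gamma> * (u - r)) * (\<alpha> * (q * c + b) + \<alpha> * C1 * exp (\<theta> * r))"
    using \<alpha>_nonneg q_pos assms J1(2) C1_nonneg by simp
  ultimately show ?thesis
    by (simp add: algebra_simps)
qed

lemma exponential_density_mult_nn_integral_J_lyap_le:
  "exponential_density lam r * (\<integral>\<^sup>+v. lyap t (v, j, r + s) \<partial>J (flow i r y))
    \<le> ennreal (lam * exp (- lam * r) * (exp (- \<Gamma> * (t - s - r))
         * (\<alpha> * (q * (dist y ystar)\<^sup>2 + b) - \<gamma> + \<alpha> * C1 * exp (\<theta> * r)) + \<beta>))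
      * indicator {0..t - s} r"
proof (cases "0 \<le> r \<and> r \<le> t - s")
  case True
  then have "exponential_density lam r * (\<integral>\<^sup>+v. lyap t (v, j, r + s) \<partial>J (flow i r y))
      \<le> ennreal (lam * exp (- lam * r)) * ennreal (exp (- \<Gamma> * (t - s - r))
        * (\<alpha> * (q * (dist y ystar)\<^sup>2 + b) - \<gamma> + \<alpha> * C1 * exp (\<theta> * r)) + \<beta>)"
    using nn_integral_J_lyap_le[of r t s i y j]
    by (intro mult_mono) (auto simp: exponential_density_def flow_nonneg mult.commute)
  then show ?thesis
    using True lyap_jump_bound_nonneg[of "(dist y ystar)\<^sup>2" r "t - s"] lam_pos by (simp add: ennreal_mult)
next
  case False
  then consider "r < 0" | "t - s < r" by linarith
  then show ?thesis
    by cases (simp_all add: exponential_density_def lyap_def)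
qed

lemma nn_integral_Pbar_lyap_le:
  fixes y :: 'y and i :: 'i and s t :: real
  defines "c \<equiv> (dist y ystar)\<^sup>2" and "E1 \<equiv> exp (- \<Gamma> * (t - s))" and "E2 \<equiv> exp (- lam * (t - s))"
    and "E3 \<equiv> exp (- (lam - \<theta>) * (t - s))"
  defines "V \<equiv> lam * (\<alpha> * (q * c + b) - \<gamma>) / \<kappa> * (E1 - E2)
    + lam * (\<alpha> * C1) / (\<kappa> - \<theta>) * (E1 - E3) + \<beta> * (1 - E2)"
  assumes st: "s \<le> t"
  shows "(\<integral>\<^sup>+x. lyap t x \<partial>Pbar \<pi> S J lam (y, i, s)) \<le> ennreal V" and "0 \<le> V"
proof -
  define H where "H r = lam * exp (- lam * r)
    * (exp (- \<Gamma> * (t - s - r)) * (\<alpha> * (q * c + b) - \<gamma> + \<alpha> * C1 * exp (\<theta> * r)) + \<beta>)" for r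
  have H_integral: "(\<integral>\<^sup>+r. ennreal (H r) * indicator {0..t - s} r \<partial>lborel) = ennreal V"
    and V: "0 \<le> V"
    using nn_integral_exp_combination[OF lam_eq \<kappa>_pos \<theta>_less_\<kappa>, of "t - s" "\<alpha> * (q * c + b) - \<gamma>"
        "\<alpha> * C1" \<beta>] lyap_jump_bound_nonneg[of c _ "t - s"] st lam_pos
    by (simp_all add: H_def V_def E1_def E2_def E3_def c_def mult.assoc)
  have "(\<integral>\<^sup>+x. lyap t x \<partial>Pbar \<pi> S J lam (y, i, s))
      \<le> (\<Sum>j\<in>UNIV. ennreal (\<pi> i j) * (\<integral>\<^sup>+r. ennreal (H r) * indicator {0..t - s} r \<partial>lborel))"
    unfolding nn_integral_Pbar[OF measurable_lyap] H_def c_def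
    by (intro sum_mono mult_left_mono nn_integral_mono exponential_density_mult_nn_integral_J_lyap_le)
       simp
  also have "\<dots> = ennreal V"
    by (simp add: H_integral sum_distrib_right[symmetric] sum_\<pi>_ennreal)
  finally show "(\<integral>\<^sup>+x. lyap t x \<partial>Pbar \<pi> S J lam (y, i, s)) \<le> ennreal V" .
  show "0 \<le> V" by (rule V)
qed

lemma V2_survival_le:
  assumes "s \<le> t"
  shows "V2_survival t (y, i, s) \<le> ennreal (exp (- lam * (t - s)) * (2 * L\<^sup>2 * (dist y ystar)\<^sup>2)
    + D0 * exp (- (lam - \<theta>) * (t - s)))"
proof -
  have "V2_survival t (y, i, s) = ennreal ((dist (S i (t - s) y) ystar)\<^sup>2 * exp (- lam * (t - s)))"
    using assms by (simp add: V2_survival_def V2_flow_def flow_nonneg ennreal_mult)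
  also have "\<dots> \<le> ennreal ((2 * L\<^sup>2 * (dist y ystar)\<^sup>2 + D0 * exp (\<theta> * (t - s))) * exp (- lam * (t - s)))"
    using assms dist_flow_sq_le[of "t - s" i y] by (intro ennreal_leI mult_right_mono) auto
  also have "(2 * L\<^sup>2 * (dist y ystar)\<^sup>2 + D0 * exp (\<theta> * (t - s))) * exp (- lam * (t - s))
      = exp (- lam * (t - s)) * (2 * L\<^sup>2 * (dist y ystar)\<^sup>2) + D0 * exp (- (lam - \<theta>) * (t - s))"
    by (simp add: algebra_simps mult_exp_exp)
  finally show ?thesis .
qed

lemma V2_survival_plus_Pbar_lyap_le:
  "V2_survival t z + (\<integral>\<^sup>+x. lyap t x \<partial>Pbar \<pi> S J lam z) \<le> lyap t z"
proof -
  obtain y i s where z: "z = (y, i, s)" by (cases z)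
  show ?thesis
  proof (cases "s \<le> t")
    case True
    define c E1 E2 E3 where "c = (dist y ystar)\<^sup>2" and "E1 = exp (- \<Gamma> * (t - s))"
      and "E2 = exp (- lam * (t - s))" and "E3 = exp (- (lam - \<theta>) * (t - s))"
    have "0 \<le> \<theta> * (t - s)" "\<theta> * (t - s) \<le> \<kappa> * (t - s)" "lam * (t - s) = \<kappa> * (t - s) + \<Gamma> * (t - s)"
      using True \<theta>_pos \<theta>_less_\<kappa> by (simp_all add: mult_right_mono) (metis lam_eq distrib_right)
    then have E: "0 \<le> E2" "E2 \<le> E3" "E3 \<le> E1"
      by (simp_all add: E1_def E2_def E3_def left_diff_distrib)
    note jump = nn_integral_Pbar_lyap_le[OF True, folded c_def E1_def E2_def E3_def]
    have "V2_survival t z + (\<integral>\<^sup>+x. lyap t x \<partial>Pbar \<pi> S J lam z)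
        \<le> ennreal (E2 * (2 * L\<^sup>2 * c) + D0 * E3 + (lam * (\<alpha> * (q * c + b) - \<gamma>) / \<kappa> * (E1 - E2)
          + lam * (\<alpha> * C1) / (\<kappa> - \<theta>) * (E1 - E3) + \<beta> * (1 - E2)))"
      using add_mono[OF V2_survival_le[OF True, folded c_def E2_def E3_def] jump(1)] jump(2)
        E D0_nonneg by (simp add: z c_def ennreal_plus)
    also have "\<dots> \<le> ennreal (\<alpha> * E1 * c + \<beta> - \<gamma> * E1)"
      using drift_budget[of c E2 E3 E1] E by (intro ennreal_leI) (simp add: c_def)
    also have "\<dots> = lyap t z"
      using True by (simp add: z lyap_def E1_def c_def)
    finally show ?thesis .
  next
    case False
    then have zero: "exponential_density lam r * (\<integral>\<^sup>+v. lyap t (v, j, r + s) \<partial>J (flow i r y)) = 0"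
      for j r
      by (cases "r < 0") (simp_all add: exponential_density_def lyap_def)
    show ?thesis
      using False by (simp add: z nn_integral_Pbar zero V2_survival_def V2_flow_def)
  qed
qed

lemma V2_flow_mult_jump_after_le:
  "V2_flow t z * emeasure (Pbar \<pi> S J lam z) {x. t < clock x} \<le> V2_survival t z"
proof -
  obtain y i s where z: "z = (y, i, s)" by (cases z)
  show ?thesis
  proof (cases "s \<le> t")
    case True
    then show ?thesis
      unfolding z V2_survival_def using emeasure_Pbar_clock_gt[OF True] by (auto intro: mult_left_mono)
  qed (simp add: z V2_flow_def)
qed

lemma dist_Psi_sq_le_suminf:
  assumes "clock (Z 0 \<omega>) \<le> t" and "\<exists>n. t < clock (Z (Suc n) \<omega>)"
  shows "ennreal ((dist (fst (Psi S Z t \<omega>)) ystar)\<^sup>2)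
    \<le> (\<Sum>n. V2_flow t (Z n \<omega>) * indicator {x. t < clock x} (Z (Suc n) \<omega>))"
proof -
  define n0 where "n0 = (LEAST n. t < clock (Z (Suc n) \<omega>))"
  have after: "t < clock (Z (Suc n0) \<omega>)"
    unfolding n0_def by (rule LeastI_ex[OF assms(2)])
  have before: "clock (Z n0 \<omega>) \<le> t"
  proof (cases n0)
    case (Suc m)
    then have "\<not> t < clock (Z (Suc m) \<omega>)"
      using not_less_Least[of m "\<lambda>n. t < clock (Z (Suc n) \<omega>)"] by (simp add: n0_def)
    then show ?thesis using Suc by simp
  qed (use assms(1) in simp)
  obtain y i s where Zn0: "Z n0 \<omega> = (y, i, s)" by (cases "Z n0 \<omega>")
  have "ennreal ((dist (fst (Psi S Z t \<omega>)) ystar)\<^sup>2)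
      = V2_flow t (Z n0 \<omega>) * indicator {x. t < clock x} (Z (Suc n0) \<omega>)"
    using before after
    by (simp add: Psi_def Let_def n0_def[symmetric] Zn0 V2_flow_def flow_nonneg)
  also have "\<dots> \<le> (\<Sum>n. V2_flow t (Z n \<omega>) * indicator {x. t < clock x} (Z (Suc n) \<omega>))"
  proof -
    have "f n0 \<le> suminf f" for f :: "nat \<Rightarrow> ennreal"
      using sum_le_suminf[of f "{n0}"] by (simp add: summableI)
    then show ?thesis .
  qed
  finally show ?thesis .
qed

lemma nn_integral_dist_Psi_sq_le:
  assumes M: "prob_space M" and MC: "markov_chain_kernel M Xbar_space (Pbar \<pi> S J lam) Z"
    and Z0: "AE \<omega> in M. Z 0 \<omega> = (y, i, 0)" and t: "0 \<le> t"
  shows "(\<integral>\<^sup>+\<omega>. ennreal ((dist (fst (Psi S Z t \<omega>)) ystar)\<^sup>2) \<partial>M)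
    \<le> ennreal (\<alpha> * exp (- \<Gamma> * t) * (dist y ystar)\<^sup>2 + \<beta>)"
proof -
  note Z[measurable] = markov_chain_kernel_measurable[OF MC]
  have "AE \<omega> in M. \<exists>n. t < clock (Z (Suc n) \<omega>)"
  proof (rule markov_chain_kernel_AE_ex_gt[OF M MC measurable_Pbar _ _ _ _ Z0])
    show "(\<integral>\<^sup>+x. exp (- clock x) \<partial>Pbar \<pi> S J lam z) \<le> ennreal (lam / (lam + 1) * exp (- clock z))" for z
      by (cases z) (simp add: nn_integral_Pbar_exp_clock)
  qed (use lam_pos in auto)
  with Z0 have "(\<integral>\<^sup>+\<omega>. ennreal ((dist (fst (Psi S Z t \<omega>)) ystar)\<^sup>2) \<partial>M)
      \<le> (\<integral>\<^sup>+\<omega>. (\<Sum>n. V2_flow t (Z n \<omega>) * indicator {x. t < clock x} (Z (Suc n) \<omega>)) \<partial>M)"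
    by (intro nn_integral_mono_AE) (auto elim!: AE_mp intro!: dist_Psi_sq_le_suminf simp: t)
  also have "\<dots> = (\<Sum>n. \<integral>\<^sup>+\<omega>. V2_flow t (Z n \<omega>) * indicator {x. t < clock x} (Z (Suc n) \<omega>) \<partial>M)"
    by (rule nn_integral_suminf) measurable
  also have "\<dots> = (\<Sum>n. \<integral>\<^sup>+\<omega>. V2_flow t (Z n \<omega>) * emeasure (Pbar \<pi> S J lam (Z n \<omega>)) {x. t < clock x} \<partial>M)"
    by (simp add: markov_chain_kernel_step[OF MC])
  also have "\<dots> \<le> (\<Sum>n. \<integral>\<^sup>+\<omega>. V2_survival t (Z n \<omega>) \<partial>M)"
    by (intro suminf_le nn_integral_mono V2_flow_mult_jump_after_le) auto
  also have "\<dots> \<le> lyap t (y, i, 0)"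
    by (rule markov_chain_kernel_suminf_le_lyapunov[OF M MC measurable_Pbar measurable_lyap
          measurable_V2_survival V2_survival_plus_Pbar_lyap_le Z0])
  also have "\<dots> \<le> ennreal (\<alpha> * exp (- \<Gamma> * t) * (dist y ystar)\<^sup>2 + \<beta>)"
    using t \<gamma>_nonneg by (simp add: lyap_def ennreal_leI)
  finally show ?thesis .
qed

end

theorem proposition5p2:
  fixes \<pi> :: "'i::finite \<Rightarrow> 'i \<Rightarrow> real"
    and S :: "'i \<Rightarrow> real \<Rightarrow> 'y::polish_space \<Rightarrow> 'y"
    and J :: "'y \<Rightarrow> 'y measure"
    and lam :: real and ystar :: 'y
    and Mc \<zeta> L a b :: real
  assumes stoch: "\<And>i j. \<pi> i j \<ge> 0" "\<And>i. (\<Sum>j\<in>UNIV. \<pi> i j) = 1"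
    and semiflow0: "\<And>i y. S i 0 y = y"
    and semiflow: "\<And>i s t y. s \<ge> 0 \<Longrightarrow> t \<ge> 0 \<Longrightarrow> S i s (S i t y) = S i (s + t) y"
    and S_cont: "\<And>i. continuous_on ({0..} \<times> UNIV) (\<lambda>(t, y). S i t y)"
    and J_kernel: "J \<in> measurable borel (prob_algebra borel)"
    and lam_pos: "lam > 0"
    and S1: "Mc \<ge> 0" "\<zeta> \<ge> 0" "\<And>t. t \<ge> 0 \<Longrightarrow> (MAX i\<in>UNIV. dist (S i t ystar) ystar) \<le> Mc * t powr \<zeta>"
    and S2: "L > 0" "\<And>t y1 y2 i. t \<ge> 0 \<Longrightarrow> dist (S i t y1) (S i t y2) \<le> L * dist y1 y2"
    and J1: "a > 0" "b \<ge> 0"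
      "\<And>y. (\<integral>\<^sup>+ u. ennreal ((dist u ystar)\<^sup>2) \<partial>(J y)) \<le> ennreal (a * (dist y ystar)\<^sup>2 + b)"
    and contr: "2 * a * L\<^sup>2 < 1"
  shows "\<exists>A B \<Gamma>. A \<ge> 0 \<and> B \<ge> 0 \<and> \<Gamma> > 0 \<and>
    (\<forall>(M :: (nat \<Rightarrow> 'y \<times> 'i \<times> real) measure) Z (x :: 'y \<times> 'i) t.
       prob_space M \<longrightarrow>
       markov_chain_kernel M Xbar_space (Pbar \<pi> S J lam) Z \<longrightarrow>
       (AE \<omega> in M. Z 0 \<omega> = (fst x, snd x, 0)) \<longrightarrow>
       t \<ge> 0 \<longrightarrow>
       (\<integral>\<^sup>+ \<omega>. ennreal ((dist (fst (Psi S Z t \<omega>)) ystar)\<^sup>2) \<partial>M)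
         \<le> ennreal (A * exp (- \<Gamma> * t) * (dist (fst x) ystar)\<^sup>2 + B))"
proof -
  interpret pdmp_lyapunov \<pi> S J lam ystar Mc \<zeta> L a b
    by unfold_locales (use assms in auto)
  show ?thesis
  proof (intro exI conjI allI impI)
    show "0 \<le> \<alpha>" "0 \<le> \<beta>" "0 < \<Gamma>"
      using \<alpha>_nonneg \<gamma>_nonneg \<gamma>_le_\<beta> \<Gamma>_pos by auto
    fix M :: "(nat \<Rightarrow> 'y \<times> 'i \<times> real) measure" and Z x and t :: real
    assume "prob_space M" "markov_chain_kernel M Xbar_space (Pbar \<pi> S J lam) Z"
      "AE \<omega> in M. Z 0 \<omega> = (fst x, snd x, 0)" "0 \<le> t"
    then show "(\<integral>\<^sup>+ \<omega>. ennreal ((dist (fst (Psi S Z t \<omega>)) ystar)\<^sup>2) \<partial>M)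
        \<le> ennreal (\<alpha> * exp (- \<Gamma> * t) * (dist (fst x) ystar)\<^sup>2 + \<beta>)"
      by (rule nn_integral_dist_Psi_sq_le)
  qed
qed

end
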